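(* Let $\mathcal{F}_2(\rho,\sigma)=\operatorname{tr}(\rho\sigma)/\max[\operatorname{tr}(\rho^2),\operatorname{tr}(\sigma^2)]$ for density matrices $\rho,\sigma$ on the same finite-dimensional Hilbert space. Then: (i) for all density matrices $\rho_1,\sigma_1$ on $\mathcal{H}_1$ and $\rho_2,\sigma_2$ on $\mathcal{H}_2$, $\mathcal{F}_2(\rho_1\otimes\rho_2,\sigma_1\otimes\sigma_2)\ge\mathcal{F}_2(\rho_1,\sigma_1)\,\mathcal{F}_2(\rho_2,\sigma_2)$; (ii) for all density matrices $\rho,\sigma$ on $\mathcal{H}_1$ and $\tau$ on $\mathcal{H}_2$, $\mathcal{F}_2(\rho\otimes\tau,\sigma\otimes\tau)=\mathcal{F}_2(\rho,\sigma)$; (iii) for all density matrices $\rho,\sigma$ and all integers $n\ge 1$, $\mathcal{F}_2(\rho^{\otimes n},\sigma^{\otimes n})=[\mathcal{F}_2(\rho,\sigma)]^n$.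
   Context: A density matrix is a positive semidefinite operator of unit trace on a finite-dimensional complex Hilbert space. *)

theory Defs
  imports "Jordan_Normal_Form.Matrix"
begin

definition mtrace :: "complex mat \<Rightarrow> complex" where
  "mtrace A = (\<Sum>i<dim_row A. A $$ (i, i))"

text \<open>Positive semidefinite: Hermitian inner product of v with A v is real and nonnegative
  for every vector v (over the complex numbers this also forces A to be Hermitian).\<close>
definition psd :: "nat \<Rightarrow> complex mat \<Rightarrow> bool" where
  "psd n A \<longleftrightarrow> A \<in> carrier_mat n n \<and>
     (\<forall>v \<in> carrier_vec n. Im ((A *\<^sub>v v) \<bullet>c v) = 0 \<and> Re ((A *\<^sub>v v) \<bullet>c v) \<ge> 0)"

definition density_matrix :: "nat \<Rightarrow> complex mat \<Rightarrow> bool" where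
  "density_matrix n \<rho> \<longleftrightarrow> psd n \<rho> \<and> mtrace \<rho> = 1"

definition kron :: "complex mat \<Rightarrow> complex mat \<Rightarrow> complex mat" where
  "kron A B = mat (dim_row A * dim_row B) (dim_col A * dim_col B)
     (\<lambda>(i, j). A $$ (i div dim_row B, j div dim_col B) * B $$ (i mod dim_row B, j mod dim_col B))"

fun tpow :: "complex mat \<Rightarrow> nat \<Rightarrow> complex mat" where
  "tpow A 0 = 1\<^sub>m 1"
| "tpow A (Suc n) = kron A (tpow A n)"

text \<open>F_2(rho,sigma) = tr(rho sigma) / max(tr(rho^2), tr(sigma^2)); the traces are real
  for density matrices, so we take real parts.\<close>
definition F2 :: "complex mat \<Rightarrow> complex mat \<Rightarrow> real" where
  "F2 \<rho> \<sigma> = Re (mtrace (\<rho> * \<sigma>)) / max (Re (mtrace (\<rho> * \<rho>))) (Re (mtrace (\<sigma> * \<sigma>)))"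

end

theory Submission
  imports Defs
begin

text \<open>For density matrices tr(\<rho> \<sigma>) \<ge> 0 and tr(\<rho>^2) > 0, and the trace is multiplicative:
  tr((A \<otimes> B)(C \<otimes> D)) = tr(A C) tr(B D). So numerator and denominators of F2 factor, and
  the three claims reduce to max(p1 p2, s1 s2) \<le> max(p1, s1) max(p2, s2), to cancelling the
  common factor tr(\<tau>^2), and to max(p^n, s^n) = max(p, s)^n for p, s \<ge> 0.

  Nonnegativity of tr(R A) for positive semidefinite R and A is shown by Gaussian elimination:
  if a is the m-th column of A and a_mm > 0, then A - a a* / a_mm is again positive semidefinite
  with vanishing m-th row and column, and tr(R a a*) / a_mm = a* R a / a_mm \<ge> 0; a vanishing
  diagonal entry a_mm forces the whole m-th row and column of A to vanish.\<close>

text \<open>Positivity is developed for entry functions nat \<Rightarrow> nat \<Rightarrow> complex. On complex numbers,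
  0 \<le> z means that z is real and nonnegative (the order of HOL-Library.Complex_Order).\<close>

definition quad_form :: "nat \<Rightarrow> (nat \<Rightarrow> nat \<Rightarrow> complex) \<Rightarrow> (nat \<Rightarrow> complex) \<Rightarrow> complex" where
  "quad_form n A v = (\<Sum>i<n. \<Sum>j<n. A i j * v j * cnj (v i))"

definition pos_semidef :: "nat \<Rightarrow> (nat \<Rightarrow> nat \<Rightarrow> complex) \<Rightarrow> bool" where
  "pos_semidef n A \<longleftrightarrow> (\<forall>v. 0 \<le> quad_form n A v)"

definition trace_prod :: "nat \<Rightarrow> (nat \<Rightarrow> nat \<Rightarrow> complex) \<Rightarrow> (nat \<Rightarrow> nat \<Rightarrow> complex) \<Rightarrow> complex" where
  "trace_prod n A B = (\<Sum>i<n. \<Sum>j<n. A i j * B j i)"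

definition schur_complement :: "(nat \<Rightarrow> nat \<Rightarrow> complex) \<Rightarrow> nat \<Rightarrow> nat \<Rightarrow> nat \<Rightarrow> complex" where
  "schur_complement A m = (\<lambda>i j. A i j - A i m * A m j / A m m)"

lemma quad_form_single:
  assumes "i < n"
  shows "quad_form n A (\<lambda>k. if k = i then x else 0) = A i i * x * cnj x"
  using assms unfolding quad_form_def
  by (simp add: algebra_simps sum.distrib if_distrib[of cnj] if_distrib[of "\<lambda>z. _ * z"]
      cong: if_cong)

lemma quad_form_pair:
  assumes "i < n" "j < n" "i \<noteq> j"
  shows "quad_form n A (\<lambda>k. if k = i then x else if k = j then y else 0) =
    A i i * x * cnj x + A i j * y * cnj x + A j i * x * cnj y + A j j * y * cnj y"
proof -
  have split: "(\<lambda>k. if k = i then x else if k = j then y else 0) =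
     (\<lambda>k. (if k = i then x else 0) + (if k = j then y else 0))"
    using assms by auto
  show ?thesis
    using assms unfolding split quad_form_def
    by (simp add: algebra_simps sum.distrib if_distrib[of cnj] if_distrib[of "\<lambda>z. _ * z"]
        cong: if_cong)
qed

lemma quad_form_add_single:
  assumes "m < n"
  shows "quad_form n A (\<lambda>k. v k + (if k = m then z else 0)) = quad_form n A v
    + z * (\<Sum>i<n. A i m * cnj (v i)) + cnj z * (\<Sum>j<n. A m j * v j) + A m m * z * cnj z"
  using assms unfolding quad_form_def
  by (simp add: algebra_simps sum.distrib sum_distrib_left if_distrib[of cnj]
      if_distrib[of "\<lambda>z. _ * z"] cong: if_cong) (subst sum.swap, simp)

lemma pos_semidef_diag_nonneg:
  assumes "pos_semidef n A" "i < n"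
  shows "0 \<le> A i i"
proof -
  have "0 \<le> quad_form n A (\<lambda>k. if k = i then 1 else 0)"
    using assms(1) unfolding pos_semidef_def by blast
  then show ?thesis by (simp add: quad_form_single[OF assms(2)])
qed

lemma pos_semidef_hermitian:
  assumes A: "pos_semidef n A" and i: "i < n" and j: "j < n"
  shows "A j i = cnj (A i j)"
proof (cases "i = j")
  case True
  then show ?thesis
    using pos_semidef_diag_nonneg[OF A i] by (simp add: less_eq_complex_def complex_eq_iff)
next
  case False
  have diag: "Im (A i i) = 0" "Im (A j j) = 0"
    using pos_semidef_diag_nonneg[OF A] i j by (auto simp: less_eq_complex_def)
  have "0 \<le> quad_form n A (\<lambda>k. if k = i then 1 else if k = j then 1 else 0)"
    using A unfolding pos_semidef_def by blast
  then have "Im (A i j) + Im (A j i) = 0"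
    unfolding quad_form_pair[OF i j False] using diag by (simp add: less_eq_complex_def)
  moreover have "0 \<le> quad_form n A (\<lambda>k. if k = i then 1 else if k = j then \<i> else 0)"
    using A unfolding pos_semidef_def by blast
  then have "Re (A i j) - Re (A j i) = 0"
    unfolding quad_form_pair[OF i j False] using diag by (simp add: less_eq_complex_def)
  ultimately show ?thesis by (simp add: complex_eq_iff)
qed

lemma pos_semidef_zero_diag_imp_zero_row:
  assumes A: "pos_semidef n A" and m: "m < n" and j: "j < n" and zero: "A m m = 0"
  shows "A m j = 0"
proof (rule ccontr)
  define b where "b = A m j"
  define r where "r = cmod b ^ 2"
  assume "A m j \<noteq> 0"
  then have "m \<noteq> j" and r: "r > 0" using zero unfolding b_def r_def by auto
  have bb: "b * cnj b = of_real r"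
    unfolding r_def by (rule complex_norm_square[symmetric])
  \<comment> \<open>chosen so that the test vector x e_m + e_j gives the quadratic form real part -1\<close>
  define t where "t = (Re (A j j) + 1) / (2 * r)"
  define x where "x = - (of_real t * b)"
  have "quad_form n A (\<lambda>k. if k = m then x else if k = j then 1 else 0) =
      A j j - 2 * of_real t * of_real r"
    unfolding quad_form_pair[OF m j \<open>m \<noteq> j\<close>] zero pos_semidef_hermitian[OF A m j]
      x_def b_def[symmetric]
    using bb by (simp add: algebra_simps)
  moreover have "0 \<le> quad_form n A (\<lambda>k. if k = m then x else if k = j then 1 else 0)"
    using A unfolding pos_semidef_def by blast
  ultimately have "0 \<le> Re (A j j) - 2 * t * r" by (simp add: less_eq_complex_def)
  moreover have "2 * t * r = Re (A j j) + 1" unfolding t_def using r by simp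
  ultimately show False by simp
qed

lemma pos_semidef_schur_complement:
  assumes A: "pos_semidef n A" and m: "m < n" and pivot: "A m m \<noteq> 0"
  shows "pos_semidef n (schur_complement A m)"
  unfolding pos_semidef_def
proof
  fix v
  define a where "a = A m m"
  define c where "c = (\<Sum>j<n. A m j * v j)"
  have a_real: "cnj a = a"
    using pos_semidef_diag_nonneg[OF A m] unfolding a_def
    by (simp add: less_eq_complex_def complex_eq_iff)
  have c_cnj: "(\<Sum>i<n. A i m * cnj (v i)) = cnj c"
    unfolding c_def cnj_sum complex_cnj_mult
    by (rule sum.cong[OF refl]) (simp add: pos_semidef_hermitian[OF A m])
  \<comment> \<open>completing the square: shifting v by -c/a along e_m absorbs the pivot term\<close>
  have "quad_form n (schur_complement A m) v = quad_form n A v - (\<Sum>i<n. A i m * cnj (v i)) * c / a"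
    unfolding quad_form_def schur_complement_def c_def a_def
    by (simp add: algebra_simps sum_subtractf sum_distrib_left sum_distrib_right sum_divide_distrib)
  also have "\<dots> = quad_form n A v - cnj c * c / a"
    unfolding c_cnj ..
  also have "\<dots> = quad_form n A v + (- c / a) * cnj c + cnj (- c / a) * c
      + a * (- c / a) * cnj (- c / a)"
  proof -
    have "a * (- c / a) * (- cnj c / a) = c * cnj c / a"
      using pivot unfolding a_def by (simp add: field_simps)
    then show ?thesis
      using a_real by (simp add: diff_divide_distrib add_divide_distrib mult.commute)
  qed
  also have "\<dots> = quad_form n A (\<lambda>k. v k + (if k = m then - c / a else 0))"
    unfolding quad_form_add_single[OF m] c_cnj c_def[symmetric] a_def[symmetric] ..
  finally show "0 \<le> quad_form n (schur_complement A m) v"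
    using A unfolding pos_semidef_def by metis
qed

lemma trace_prod_schur_complement:
  assumes A: "pos_semidef n A" and m: "m < n"
  shows "trace_prod n R A = trace_prod n R (schur_complement A m) + quad_form n R (\<lambda>k. A k m) / A m m"
proof -
  have "quad_form n R (\<lambda>k. A k m) = (\<Sum>i<n. \<Sum>j<n. R i j * (A j m * A m i))"
    unfolding quad_form_def
    by (intro sum.cong refl) (simp add: pos_semidef_hermitian[OF A _ m] mult.assoc)
  then show ?thesis
    unfolding trace_prod_def schur_complement_def
    by (simp add: algebra_simps sum_subtractf sum.distrib sum_divide_distrib)
qed

lemma complex_divide_nonneg: "0 \<le> (x::complex) \<Longrightarrow> 0 \<le> y \<Longrightarrow> 0 \<le> x / y"
  by (simp add: less_eq_complex_def Re_divide Im_divide)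

lemma trace_prod_nonneg_on_block:
  assumes R: "pos_semidef n R" and "m \<le> n" and "pos_semidef n A"
    and "\<And>i j. i < n \<Longrightarrow> j < n \<Longrightarrow> i < m \<or> j < m \<Longrightarrow> A i j = 0"
  shows "0 \<le> trace_prod n R A"
  using assms(2-)
proof (induction m arbitrary: A rule: inc_induct)
  case base
  then show ?case by (simp add: trace_prod_def)
next
  case (step m)
  show ?case
  proof (cases "A m m = 0")
    case True
    have row: "A m j = 0" and col: "A j m = 0" if "j < n" for j
      using pos_semidef_zero_diag_imp_zero_row[OF step.prems(1) step.hyps(2) that True]
        pos_semidef_hermitian[OF step.prems(1) step.hyps(2) that] by simp_all
    have "A i j = 0" if "i < n" "j < n" "i < Suc m \<or> j < Suc m" for i j
      using that step.prems(2) row col by (auto simp: less_Suc_eq)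
    then show ?thesis
      by (rule step.IH[OF step.prems(1)])
  next
    case False
    have "schur_complement A m i j = 0" if "i < n" "j < n" "i < Suc m \<or> j < Suc m" for i j
      using that step.prems(2) step.hyps(2) False by (auto simp: schur_complement_def less_Suc_eq)
    then have "0 \<le> trace_prod n R (schur_complement A m)"
      by (rule step.IH[OF pos_semidef_schur_complement[OF step.prems(1) step.hyps(2) False]])
    moreover have "0 \<le> quad_form n R (\<lambda>k. A k m) / A m m"
      using R pos_semidef_diag_nonneg[OF step.prems(1) step.hyps(2)]
      unfolding pos_semidef_def by (blast intro: complex_divide_nonneg)
    ultimately show ?thesis
      unfolding trace_prod_schur_complement[OF step.prems(1) step.hyps(2)] by simp
  qed
qed

lemma trace_prod_nonneg: "pos_semidef n R \<Longrightarrow> pos_semidef n A \<Longrightarrow> 0 \<le> trace_prod n R A"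
  using trace_prod_nonneg_on_block[of n R 0 A] by simp

definition entries :: "complex mat \<Rightarrow> nat \<Rightarrow> nat \<Rightarrow> complex" where
  "entries A i j = A $$ (i, j)"

lemma psd_carrier: "psd n A \<Longrightarrow> A \<in> carrier_mat n n"
  unfolding psd_def by simp

lemma psd_imp_pos_semidef:
  assumes "psd n A"
  shows "pos_semidef n (entries A)"
  unfolding pos_semidef_def
proof
  fix v
  have "quad_form n (entries A) v = (A *\<^sub>v vec n v) \<bullet>c vec n v"
    using psd_carrier[OF assms] unfolding quad_form_def entries_def
    by (auto simp: scalar_prod_def atLeast0LessThan sum_distrib_right intro!: sum.cong)
  then show "0 \<le> quad_form n (entries A) v"
    using assms unfolding psd_def less_eq_complex_def by simp
qed

lemma mtrace_mult:
  assumes "A \<in> carrier_mat n n" "B \<in> carrier_mat n n"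
  shows "mtrace (A * B) = trace_prod n (entries A) (entries B)"
  using assms unfolding mtrace_def trace_prod_def entries_def
  by (auto simp: scalar_prod_def atLeast0LessThan intro!: sum.cong)

lemma mtrace_mult_psd_nonneg:
  assumes "psd n A" "psd n B"
  shows "0 \<le> mtrace (A * B)"
  unfolding mtrace_mult[OF assms[THEN psd_carrier]]
  by (intro trace_prod_nonneg psd_imp_pos_semidef assms)

lemma Re_mtrace_square_pos:
  assumes D: "density_matrix n A"
  shows "0 < Re (mtrace (A * A))"
proof -
  have C: "A \<in> carrier_mat n n" and P: "pos_semidef n (entries A)"
    using D unfolding density_matrix_def by (auto intro: psd_carrier psd_imp_pos_semidef)
  have "(\<Sum>i<n. A $$ (i, i)) = 1"
    using D C unfolding density_matrix_def mtrace_def by auto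
  then obtain k where k: "k < n" "A $$ (k, k) \<noteq> 0"
    by (metis (mono_tags, lifting) lessThan_iff sum.neutral zero_neq_one)
  have "0 < cmod (A $$ (k, k)) ^ 2"
    using k by simp
  also have "\<dots> \<le> (\<Sum>j<n. cmod (A $$ (k, j)) ^ 2)"
    by (rule member_le_sum) (use k in auto)
  also have "\<dots> \<le> (\<Sum>i<n. \<Sum>j<n. cmod (A $$ (i, j)) ^ 2)"
    by (rule member_le_sum) (use k in \<open>auto intro: sum_nonneg\<close>)
  also have "\<dots> = Re (mtrace (A * A))"
    unfolding mtrace_mult[OF C C] trace_prod_def Re_sum
  proof (intro sum.cong refl)
    fix i j
    assume "i \<in> {..<n}" "j \<in> {..<n}"
    then have "A $$ (j, i) = cnj (A $$ (i, j))"
      using pos_semidef_hermitian[OF P, of i j] unfolding entries_def by simp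
    then show "cmod (A $$ (i, j)) ^ 2 = Re (entries A i j * entries A j i)"
      by (simp add: entries_def complex_mult_cnj cmod_def)
  qed
  finally show ?thesis .
qed

lemma sum_lessThan_mult:
  "(\<Sum>p<n1 * n2. g p) = (\<Sum>i<n1. \<Sum>k<n2. g (i * n2 + k :: nat))"
proof -
  have "(\<Sum>p<n1 * n2. g p) = (\<Sum>i<n1. sum g {i * n2..<i * n2 + n2})"
    by (rule sum.nat_group[symmetric])
  also have "\<dots> = (\<Sum>i<n1. \<Sum>k<n2. g (i * n2 + k))"
  proof (rule sum.cong[OF refl])
    fix i
    have "sum g {0 + i * n2..<n2 + i * n2} = (\<Sum>k = 0..<n2. g (k + i * n2))"
      by (rule sum.shift_bounds_nat_ivl)
    then show "sum g {i * n2..<i * n2 + n2} = (\<Sum>k<n2. g (i * n2 + k))"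
      by (simp add: atLeast0LessThan add.commute)
  qed
  finally show ?thesis .
qed

lemma kron_carrier:
  "A \<in> carrier_mat n1 n1 \<Longrightarrow> B \<in> carrier_mat n2 n2 \<Longrightarrow> kron A B \<in> carrier_mat (n1 * n2) (n1 * n2)"
  unfolding kron_def by auto

lemma index_kron:
  assumes "A \<in> carrier_mat n1 n1" "B \<in> carrier_mat n2 n2" "i < n1" "j < n1" "k < n2" "l < n2"
  shows "kron A B $$ (i * n2 + k, j * n2 + l) = A $$ (i, j) * B $$ (k, l)"
proof -
  have "x * n2 + y < n1 * n2" if "x < n1" "y < n2" for x y
  proof -
    have "x * n2 + y < (x + 1) * n2" using that by simp
    also have "\<dots> \<le> n1 * n2" using that by (intro mult_le_mono1) simp
    finally show ?thesis .
  qed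
  then show ?thesis using assms unfolding kron_def by auto
qed

lemma mtrace_mult_kron:
  assumes A: "A \<in> carrier_mat n1 n1" and C: "C \<in> carrier_mat n1 n1"
    and B: "B \<in> carrier_mat n2 n2" and D: "D \<in> carrier_mat n2 n2"
  shows "mtrace (kron A B * kron C D) = mtrace (A * C) * mtrace (B * D)"
proof -
  have "mtrace (kron A B * kron C D) =
      (\<Sum>i<n1. \<Sum>k<n2. \<Sum>j<n1. \<Sum>l<n2. (A $$ (i, j) * B $$ (k, l)) * (C $$ (j, i) * D $$ (l, k)))"
    unfolding mtrace_mult[OF kron_carrier[OF A B] kron_carrier[OF C D]] trace_prod_def sum_lessThan_mult
    using A B C D by (auto simp: entries_def index_kron intro!: sum.cong)
  also have "\<dots> = (\<Sum>i<n1. \<Sum>k<n2. \<Sum>j<n1. \<Sum>l<n2. (A $$ (i, j) * C $$ (j, i)) * (B $$ (k, l) * D $$ (l, k)))"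
    by (simp only: mult_ac)
  also have "\<dots> = mtrace (A * C) * mtrace (B * D)"
    unfolding mtrace_mult[OF A C] mtrace_mult[OF B D] trace_prod_def sum_product entries_def by simp
  finally show ?thesis .
qed

lemma tpow_carrier: "A \<in> carrier_mat d d \<Longrightarrow> tpow A n \<in> carrier_mat (d ^ n) (d ^ n)"
  by (induction n) (auto intro: kron_carrier)

lemma mtrace_mult_tpow:
  assumes "A \<in> carrier_mat d d" "B \<in> carrier_mat d d"
  shows "mtrace (tpow A n * tpow B n) = mtrace (A * B) ^ n"
proof (induction n)
  case 0
  then show ?case by (simp add: mtrace_def)
next
  case (Suc n)
  then show ?case by (simp add: mtrace_mult_kron[OF assms tpow_carrier[OF assms(1)] tpow_carrier[OF assms(2)]])
qed

lemma Re_mtrace_mult_kron: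
  assumes "psd n1 A" "psd n1 C" "B \<in> carrier_mat n2 n2" "D \<in> carrier_mat n2 n2"
  shows "Re (mtrace (kron A B * kron C D)) = Re (mtrace (A * C)) * Re (mtrace (B * D))"
  using mtrace_mult_psd_nonneg[OF assms(1,2)]
  unfolding mtrace_mult_kron[OF psd_carrier[OF assms(1)] psd_carrier[OF assms(2)] assms(3,4)]
  by (simp add: less_eq_complex_def)

lemma Re_mtrace_mult_tpow:
  assumes "psd d A" "psd d B"
  shows "Re (mtrace (tpow A n * tpow B n)) = Re (mtrace (A * B)) ^ n"
proof -
  have "mtrace (A * B) = of_real (Re (mtrace (A * B)))"
    using mtrace_mult_psd_nonneg[OF assms] by (simp add: less_eq_complex_def complex_eq_iff)
  then show ?thesis
    unfolding mtrace_mult_tpow[OF assms[THEN psd_carrier]] by (metis Re_complex_of_real of_real_power)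
qed

lemma F2_kron:
  assumes "psd n1 \<rho>1" "psd n1 \<sigma>1" "psd n2 \<rho>2" "psd n2 \<sigma>2"
  shows "F2 (kron \<rho>1 \<rho>2) (kron \<sigma>1 \<sigma>2) =
    Re (mtrace (\<rho>1 * \<sigma>1)) * Re (mtrace (\<rho>2 * \<sigma>2)) /
    max (Re (mtrace (\<rho>1 * \<rho>1)) * Re (mtrace (\<rho>2 * \<rho>2)))
        (Re (mtrace (\<sigma>1 * \<sigma>1)) * Re (mtrace (\<sigma>2 * \<sigma>2)))"
  unfolding F2_def
    Re_mtrace_mult_kron[OF assms(1,2) assms(3,4)[THEN psd_carrier]]
    Re_mtrace_mult_kron[OF assms(1,1) assms(3,3)[THEN psd_carrier]]
    Re_mtrace_mult_kron[OF assms(2,2) assms(4,4)[THEN psd_carrier]] ..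

lemma F2_tpow:
  assumes "psd d \<rho>" "psd d \<sigma>"
  shows "F2 (tpow \<rho> n) (tpow \<sigma> n) =
    Re (mtrace (\<rho> * \<sigma>)) ^ n / max (Re (mtrace (\<rho> * \<rho>)) ^ n) (Re (mtrace (\<sigma> * \<sigma>)) ^ n)"
  unfolding F2_def using assms by (simp add: Re_mtrace_mult_tpow)

lemma density_matrix_psd: "density_matrix n \<rho> \<Longrightarrow> psd n \<rho>"
  unfolding density_matrix_def by simp

lemma Re_mtrace_mult_density_nonneg:
  "density_matrix n \<rho> \<Longrightarrow> density_matrix n \<sigma> \<Longrightarrow> 0 \<le> Re (mtrace (\<rho> * \<sigma>))"
  using mtrace_mult_psd_nonneg[OF density_matrix_psd density_matrix_psd]
  by (simp add: less_eq_complex_def)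

lemma mult_divide_max_le:
  fixes a1 a2 p1 p2 s1 s2 :: real
  assumes "0 \<le> a1" "0 \<le> a2" "0 < p1" "0 < p2" "0 < s1" "0 < s2"
  shows "a1 / max p1 s1 * (a2 / max p2 s2) \<le> (a1 * a2) / max (p1 * p2) (s1 * s2)"
proof -
  have "max (p1 * p2) (s1 * s2) \<le> max p1 s1 * max p2 s2"
    using assms by (auto intro: mult_mono)
  moreover have "0 < max (p1 * p2) (s1 * s2)"
    using assms by (simp add: less_max_iff_disj)
  ultimately show ?thesis
    using assms by (simp add: divide_left_mono)
qed

lemma divide_max_mult_cancel:
  fixes a p s t :: real
  assumes "0 < t"
  shows "(a * t) / max (p * t) (s * t) = a / max p s"
proof -
  have "max (p * t) (s * t) = max p s * t"
    using assms by (simp add: max_mult_distrib_right)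
  then show ?thesis
    using assms by simp
qed

lemma divide_max_power:
  fixes a p s :: real
  assumes "0 \<le> p" "0 \<le> s"
  shows "a ^ n / max (p ^ n) (s ^ n) = (a / max p s) ^ n"
proof -
  have "max (p ^ n) (s ^ n) = max p s ^ n"
  proof (cases "p \<le> s")
    case True
    then show ?thesis
      using assms power_mono[OF True, of n] by (simp add: max_def)
  next
    case False
    then have "s \<le> p" by simp
    then show ?thesis
      using assms power_mono[OF \<open>s \<le> p\<close>, of n] by (simp add: max_def)
  qed
  then show ?thesis by (simp add: power_divide)
qed

theorem theorem4:
  shows "(\<forall>n1 n2 \<rho>1 \<sigma>1 \<rho>2 \<sigma>2.
            density_matrix n1 \<rho>1 \<longrightarrow> density_matrix n1 \<sigma>1 \<longrightarrow>
            density_matrix n2 \<rho>2 \<longrightarrow> density_matrix n2 \<sigma>2 \<longrightarrow>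
            F2 (kron \<rho>1 \<rho>2) (kron \<sigma>1 \<sigma>2) \<ge> F2 \<rho>1 \<sigma>1 * F2 \<rho>2 \<sigma>2)
       \<and> (\<forall>n1 n2 \<rho> \<sigma> \<tau>.
            density_matrix n1 \<rho> \<longrightarrow> density_matrix n1 \<sigma> \<longrightarrow> density_matrix n2 \<tau> \<longrightarrow>
            F2 (kron \<rho> \<tau>) (kron \<sigma> \<tau>) = F2 \<rho> \<sigma>)
       \<and> (\<forall>d \<rho> \<sigma> (n::nat).
            density_matrix d \<rho> \<longrightarrow> density_matrix d \<sigma> \<longrightarrow> n \<ge> 1 \<longrightarrow>
            F2 (tpow \<rho> n) (tpow \<sigma> n) = F2 \<rho> \<sigma> ^ n)"
proof (intro conjI allI impI)
  fix n1 n2 \<rho>1 \<sigma>1 \<rho>2 \<sigma>2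
  assume D: "density_matrix n1 \<rho>1" "density_matrix n1 \<sigma>1" "density_matrix n2 \<rho>2" "density_matrix n2 \<sigma>2"
  show "F2 \<rho>1 \<sigma>1 * F2 \<rho>2 \<sigma>2 \<le> F2 (kron \<rho>1 \<rho>2) (kron \<sigma>1 \<sigma>2)"
    unfolding F2_kron[OF D[THEN density_matrix_psd]] unfolding F2_def
    using D by (intro mult_divide_max_le Re_mtrace_mult_density_nonneg Re_mtrace_square_pos)
next
  fix n1 n2 \<rho> \<sigma> \<tau>
  assume D: "density_matrix n1 \<rho>" "density_matrix n1 \<sigma>" "density_matrix n2 \<tau>"
  show "F2 (kron \<rho> \<tau>) (kron \<sigma> \<tau>) = F2 \<rho> \<sigma>"
    unfolding F2_kron[OF D(1,2,3,3)[THEN density_matrix_psd]] unfolding F2_def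
    using D(3) by (intro divide_max_mult_cancel Re_mtrace_square_pos)
next
  fix d \<rho> \<sigma> and n :: nat
  assume D: "density_matrix d \<rho>" "density_matrix d \<sigma>"
  show "F2 (tpow \<rho> n) (tpow \<sigma> n) = F2 \<rho> \<sigma> ^ n"
    unfolding F2_tpow[OF D[THEN density_matrix_psd]] unfolding F2_def
    using D by (intro divide_max_power Re_mtrace_mult_density_nonneg)
qed

end
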